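(* Fix $q>0$, $R_B>0$ and $\mathbf{w}\in\mathbb{R}^n_{++}$ with $W=\sum_b w_b$. Let $\Pi\in(0,W)$. Write $$P_{\max}=\frac{W qR_B}{W-\Pi},\qquad g(P)=\frac{(qR_BW-(W-\Pi)P)^2}{2qR_B(W-\Pi)W}.$$ Then the set $\{(P,R_A)\in\mathbb{R}^2_+:\ \pi_A^*(P,R_A,R_B)=\Pi\}$ is described as follows. (a) If $\Pi<W/2$, the set consists exactly of: - the pairs $(P,R_A)$ with $P\in\big[0,\tfrac{W-2\Pi}{W-\Pi}qR_B\big)$ and $R_A=\frac{2\Pi}{W}(qR_B-P)$; together with - the pairs $(P,R_A)$ with $P\in\big[\tfrac{W-2\Pi}{W-\Pi}qR_B,\,P_{\max}\big]$ and $R_A=g(P)$. (b) If $\Pi\ge W/2$, the set consists exactly of the pairs $(P,R_A)$ with $P\in[0,P_{\max}]$ and $R_A=g(P)$. Moreover, $\pi_A^*(P,R_A,R_B)>\Pi$ for every $R_A\ge 0$ whenever $P>P_{\max}$.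
   Context: **Battlefields.** There are $n$ battlefields $\mathcal{B}=\{1,\dots,n\}$. Battlefield $b$ has value $w_b>0$, common to both players, and $W=\sum_b w_b$. **Endowments.** Player $A$ has $P\ge 0$ pre-allocated resources and $R_A\ge 0$ real-time resources. Player $B$ has $R_B>0$ real-time resources. The constant $q>0$ is the effectiveness of $B$'s resources relative to $A$'s. **Stage 1.** Player $A$ deterministically chooses a pre-allocation $\mathbf{p}\in\Delta_n(P):=\{\mathbf{p}\in\mathbb{R}^n_+:\sum_b p_b=P\}$. This choice is binding and revealed to $B$. **Stage 2.** Each player $i\in\{A,B\}$ simultaneously chooses a distribution $F_i$ over allocations $\mathbf{x}_i\in\mathbb{R}^n_+$ with $\mathbb{E}[\sum_b x_{i,b}]\le R_i$. Player $A$ wins battlefield $b$ if $x_{A,b}+p_b>q\,x_{B,b}$; otherwise $B$ wins it. The tie-breaking rule is arbitrary. $A$'s payoff is the expected total value won, and $B$'s payoff is $W$ minus this. **Equilibrium payoffs.** The stage-2 game has unique equilibrium payoffs; $A$'s is denoted $\pi_A(\mathbf{p},R_A,R_B)$. Define $$\pi_A^*(P,R_A,R_B)=\max_{\mathbf{p}\in\Delta_n(P)}\pi_A(\mathbf{p},R_A,R_B).$$ This maximum equals the following. - If $qR_B>P$ and $R_A<\dfrac{2(qR_B-P)^2}{2qR_B-P}$: $\ \pi_A^*(P,R_A,R_B)=\dfrac{W R_A}{2(qR_B-P)}$. - Otherwise: $\ \pi_A^*(P,R_A,R_B)=W\left(1-\dfrac{qR_B}{P+R_A+\sqrt{(R_A+P)^2-P^2}}\right)$.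 *)

theory Defs
  imports Complex_Main
begin

text \<open>Optimal equilibrium payoff of player A, pi_A^*(P,R_A,R_B), in the closed form
  given in the paper (depends on the battlefield values only through W = sum of values).\<close>
definition pi_A_star :: "real \<Rightarrow> real \<Rightarrow> real \<Rightarrow> real \<Rightarrow> real \<Rightarrow> real" where
  "pi_A_star W q P R_A R_B =
     (if q * R_B > P \<and> R_A < 2 * (q * R_B - P)^2 / (2 * q * R_B - P)
      then W * R_A / (2 * (q * R_B - P))
      else W * (1 - q * R_B / (P + R_A + sqrt ((R_A + P)^2 - P^2))))"

definition P_max :: "real \<Rightarrow> real \<Rightarrow> real \<Rightarrow> real \<Rightarrow> real" where
  "P_max W Pi q R_B = W * q * R_B / (W - Pi)"

definition g_fun :: "real \<Rightarrow> real \<Rightarrow> real \<Rightarrow> real \<Rightarrow> real \<Rightarrow> real" where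
  "g_fun W Pi q R_B P = (q * R_B * W - (W - Pi) * P)^2 / (2 * q * R_B * (W - Pi) * W)"

end

theory Submission
  imports Defs
begin

text \<open>Write \<open>Q = q R_B\<close> and \<open>M = P_max = W Q / (W - \<Pi>)\<close>. Outside the linear regime
  \<open>\<pi>\<^sub>A\<^sup>* = W (1 - Q / S)\<close>, where \<open>S = P + R + \<surd>(R (R + 2P))\<close> is strictly increasing in \<open>R\<close>,
  so \<open>\<pi>\<^sub>A\<^sup>* = \<Pi>\<close> there means \<open>S = M\<close>, which solves to \<open>R = (M - P)\<^sup>2 / (2M)\<close>. At the
  boundary \<open>R = 2(Q - P)\<^sup>2/(2Q - P)\<close> of the linear regime \<open>S = 2Q - P\<close>; comparing this
  with \<open>M\<close> shows that the level set leaves the linear regime exactly at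
  \<open>P = (W - 2\<Pi>) Q / (W - \<Pi>)\<close>, which is positive iff \<open>\<Pi> < W/2\<close>. Since \<open>S \<ge> P + R\<close>,
  every \<open>P > M\<close> yields \<open>S > M\<close> and hence a payoff above \<open>\<Pi>\<close>.\<close>

definition effective_budget :: "real \<Rightarrow> real \<Rightarrow> real" where
  "effective_budget P R = P + R + sqrt ((R + P)^2 - P^2)"

lemma effective_budget_alt: "effective_budget P R = P + R + sqrt (R * (R + 2 * P))"
  unfolding effective_budget_def by (simp add: power2_eq_square algebra_simps)

lemma effective_budget_ge:
  assumes "P \<ge> 0" "R \<ge> 0"
  shows "effective_budget P R \<ge> P + R"
  using assms by (simp add: effective_budget_alt)

lemma effective_budget_strict_mono:
  assumes "P \<ge> 0" "0 \<le> R1" "R1 < R2"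
  shows "effective_budget P R1 < effective_budget P R2"
proof -
  have "R1 * (R1 + 2 * P) \<le> R2 * (R2 + 2 * P)" using assms by (intro mult_mono) auto
  then have "sqrt (R1 * (R1 + 2 * P)) \<le> sqrt (R2 * (R2 + 2 * P))" by simp
  then show ?thesis using assms unfolding effective_budget_alt by linarith
qed

lemma real_sqrt_eq_iff_square: "x \<ge> 0 \<Longrightarrow> sqrt x = y \<longleftrightarrow> 0 \<le> y \<and> y^2 = x"
  by (auto intro: real_sqrt_unique)

lemma effective_budget_eq_iff:
  assumes "P \<ge> 0" "R \<ge> 0" "M > 0"
  shows "effective_budget P R = M \<longleftrightarrow> P \<le> M \<and> R = (M - P)^2 / (2 * M)"
proof -
  have square: "(M - P - R)^2 = R * (R + 2 * P) \<longleftrightarrow> 2 * M * R = (M - P)^2"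
    by (auto simp: power2_eq_square algebra_simps)
  have "effective_budget P R = M \<longleftrightarrow> sqrt (R * (R + 2 * P)) = M - P - R"
    by (auto simp: effective_budget_alt)
  also have "\<dots> \<longleftrightarrow> R \<le> M - P \<and> 2 * M * R = (M - P)^2"
    using assms by (simp add: real_sqrt_eq_iff_square square)
  also have "\<dots> \<longleftrightarrow> P \<le> M \<and> 2 * M * R = (M - P)^2"
  proof -
    have "R \<le> M - P" if "P \<le> M" "2 * M * R = (M - P)^2"
    proof -
      have "2 * M * R \<le> 2 * M * (M - P)"
        using that assms by (simp add: power2_eq_square mult_right_mono)
      then show ?thesis using assms by simp
    qed
    then show ?thesis using assms by auto
  qed
  also have "\<dots> \<longleftrightarrow> P \<le> M \<and> R = (M - P)^2 / (2 * M)"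
    using assms by (auto simp: field_simps)
  finally show ?thesis .
qed

lemma effective_budget_at_threshold:
  assumes "P \<ge> 0" "P < Q"
  shows "effective_budget P (2 * (Q - P)^2 / (2 * Q - P)) = 2 * Q - P"
proof -
  define R where "R = 2 * (Q - P)^2 / (2 * Q - P)"
  have pos: "2 * Q - P > 0" using assms by simp
  have "R * (R + 2 * P) = (2 * Q * (Q - P) / (2 * Q - P))^2"
    using pos unfolding R_def by (simp add: field_simps power2_eq_square)
  moreover have "2 * Q * (Q - P) / (2 * Q - P) \<ge> 0" using assms pos by simp
  ultimately have "sqrt (R * (R + 2 * P)) = 2 * Q * (Q - P) / (2 * Q - P)"
    by (intro real_sqrt_unique) simp_all
  moreover have "R + 2 * Q * (Q - P) / (2 * Q - P) = 2 * (Q - P) * (2 * Q - P) / (2 * Q - P)"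
    unfolding R_def by (simp add: add_divide_distrib[symmetric] power2_eq_square algebra_simps)
  then have "P + R + 2 * Q * (Q - P) / (2 * Q - P) = 2 * Q - P"
    using pos by simp
  ultimately show ?thesis unfolding R_def[symmetric] effective_budget_alt by simp
qed

lemma pi_A_star_alt:
  "pi_A_star W q P R R_B =
     (if q * R_B > P \<and> R < 2 * (q * R_B - P)^2 / (2 * (q * R_B) - P)
      then W * R / (2 * (q * R_B - P)) else W * (1 - q * R_B / effective_budget P R))"
  unfolding pi_A_star_def effective_budget_def by (simp add: mult.assoc)

context
  fixes W Pi Q :: real
  assumes Q_pos: "Q > 0" and Pi_pos: "0 < Pi" and Pi_less: "Pi < W"
begin

lemma nonlinear_payoff_eq_iff:
  "W * (1 - Q / S) = Pi \<longleftrightarrow> S = W * Q / (W - Pi)"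
proof (cases "S = 0")
  case False
  then have "W * (1 - Q / S) = Pi \<longleftrightarrow> S * (W - Pi) = W * Q"
    using Pi_pos Pi_less by (auto simp: field_simps)
  then show ?thesis using Pi_less by (auto simp: field_simps)
qed (use Q_pos Pi_pos Pi_less in simp)

lemma threshold_budget_le_iff:
  "2 * Q - P \<le> W * Q / (W - Pi) \<longleftrightarrow> (W - 2 * Pi) / (W - Pi) * Q \<le> P"
  using Pi_less by (simp add: field_simps)

lemma linear_regime_iff:
  assumes "P < Q"
  shows "2 * Pi / W * (Q - P) < 2 * (Q - P)^2 / (2 * Q - P) \<longleftrightarrow> P < (W - 2 * Pi) / (W - Pi) * Q"
proof -
  have pos: "2 * Q - P > 0" "Q - P > 0" using assms Q_pos by auto
  have "2 * Pi / W * (Q - P) < 2 * (Q - P)^2 / (2 * Q - P) \<longleftrightarrow>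
        2 * (Q - P) * (Pi * (2 * Q - P)) < 2 * (Q - P) * ((Q - P) * W)"
    using pos Pi_pos Pi_less by (simp add: field_simps power2_eq_square)
  also have "\<dots> \<longleftrightarrow> Pi * (2 * Q - P) < (Q - P) * W"
    using pos by simp
  also have "\<dots> \<longleftrightarrow> P < (W - 2 * Pi) / (W - Pi) * Q"
    using Pi_less by (simp add: field_simps)
  finally show ?thesis .
qed

lemma level_set_point_iff:
  assumes P: "P \<ge> 0" and R: "R \<ge> 0"
  defines "M \<equiv> W * Q / (W - Pi)" and "T \<equiv> (W - 2 * Pi) / (W - Pi) * Q"
  shows "(if Q > P \<and> R < 2 * (Q - P)^2 / (2 * Q - P)
          then W * R / (2 * (Q - P)) else W * (1 - Q / effective_budget P R)) = Pi
     \<longleftrightarrow> (P < T \<and> R = 2 * Pi / W * (Q - P)) \<or> (T \<le> P \<and> P \<le> M \<and> R = (M - P)^2 / (2 * M))"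
proof -
  have M_pos: "M > 0" using Q_pos Pi_pos Pi_less unfolding M_def by simp
  have T_less: "T < Q" using Q_pos Pi_pos Pi_less unfolding T_def by (simp add: field_simps)
  have nonlinear: "W * (1 - Q / effective_budget P R) = Pi \<longleftrightarrow> P \<le> M \<and> R = (M - P)^2 / (2 * M)"
    using nonlinear_payoff_eq_iff effective_budget_eq_iff[OF P R M_pos] unfolding M_def by simp
  show ?thesis
  proof (cases "Q > P \<and> R < 2 * (Q - P)^2 / (2 * Q - P)")
    case True
    then have "effective_budget P R < 2 * Q - P"
      using effective_budget_strict_mono[OF P R] effective_budget_at_threshold[OF P] by metis
    then have "\<not> (T \<le> P \<and> P \<le> M \<and> R = (M - P)^2 / (2 * M))"
      using effective_budget_eq_iff[OF P R M_pos] threshold_budget_le_iff[of P]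
      unfolding M_def T_def by auto
    moreover have "W * R / (2 * (Q - P)) = Pi \<longleftrightarrow> R = 2 * Pi / W * (Q - P)"
      using True Pi_pos Pi_less by (auto simp: field_simps)
    moreover have "R = 2 * Pi / W * (Q - P) \<Longrightarrow> P < T"
      using True linear_regime_iff[of P] unfolding T_def by auto
    ultimately show ?thesis using True by auto
  next
    case False
    have "T \<le> P" if "effective_budget P R = M"
    proof (cases "Q > P")
      case True
      with False have "R \<ge> 2 * (Q - P)^2 / (2 * Q - P)" by simp
      then have "effective_budget P R \<ge> 2 * Q - P"
        using effective_budget_strict_mono[OF P, of "2 * (Q - P)^2 / (2 * Q - P)" R]
          effective_budget_at_threshold[OF P True] True P by (cases "R = 2 * (Q - P)^2 / (2 * Q - P)") auto
      then show ?thesis using that threshold_budget_le_iff unfolding M_def T_def by simp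
    qed (use T_less in simp)
    moreover have "\<not> (P < T \<and> R = 2 * Pi / W * (Q - P))"
      using linear_regime_iff False T_less unfolding T_def by auto
    ultimately show ?thesis
      using False nonlinear effective_budget_eq_iff[OF P R M_pos] by auto
  qed
qed

end

lemma g_fun_eq:
  assumes "q * R_B > 0" "0 < Pi" "Pi < W"
  shows "g_fun W Pi q R_B P = (P_max W Pi q R_B - P)^2 / (2 * P_max W Pi q R_B)"
proof -
  define D where "D = W - Pi"
  have pos: "D > 0" "W > 0" "q \<noteq> 0" "R_B \<noteq> 0" using assms unfolding D_def by auto
  have "P_max W Pi q R_B - P = (q * R_B * W - D * P) / D" "P_max W Pi q R_B = W * (q * R_B) / D"
    using pos unfolding P_max_def D_def by (simp_all add: field_simps)
  then have "(P_max W Pi q R_B - P)^2 / (2 * P_max W Pi q R_B)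
      = ((q * R_B * W - D * P) / D)^2 / (2 * (W * (q * R_B) / D))"
    by (simp only:)
  also have "\<dots> = g_fun W Pi q R_B P"
    using pos assms unfolding g_fun_def D_def[symmetric]
    by (simp add: power_divide field_simps power2_eq_square)
  finally show ?thesis ..
qed

lemma pi_A_star_eq_iff:
  assumes "q * R_B > 0" "0 < Pi" "Pi < W" "P \<ge> 0" "R \<ge> 0"
  shows "pi_A_star W q P R R_B = Pi \<longleftrightarrow>
    (P < (W - 2 * Pi) / (W - Pi) * q * R_B \<and> R = 2 * Pi / W * (q * R_B - P)) \<or>
    ((W - 2 * Pi) / (W - Pi) * q * R_B \<le> P \<and> P \<le> P_max W Pi q R_B \<and> R = g_fun W Pi q R_B P)"
  using level_set_point_iff[OF assms] g_fun_eq[OF assms(1-3)]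
  unfolding pi_A_star_alt P_max_def by (simp add: mult.assoc)

lemma pi_A_star_gt_above_P_max:
  assumes "q * R_B > 0" "0 < Pi" "Pi < W" "P > P_max W Pi q R_B" "R \<ge> 0"
  shows "pi_A_star W q P R R_B > Pi"
proof -
  define M where "M = P_max W Pi q R_B"
  have "W > 0" "q \<noteq> 0" "R_B \<noteq> 0" using assms by auto
  have M_pos: "M > 0"
    using assms unfolding M_def P_max_def by (intro divide_pos_pos) (auto simp: mult.assoc)
  have "q * R_B < M" using assms unfolding M_def P_max_def by (simp add: field_simps)
  then have nonlinear: "\<not> q * R_B > P" using assms unfolding M_def by simp
  have "effective_budget P R > M"
    using effective_budget_ge[of P R] assms M_pos unfolding M_def by simp
  then have "q * R_B / effective_budget P R < q * R_B / M"
    using M_pos assms by (simp add: divide_strict_left_mono)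
  also have "q * R_B / M = (W - Pi) / W"
    using assms \<open>W > 0\<close> \<open>q \<noteq> 0\<close> \<open>R_B \<noteq> 0\<close>
    unfolding M_def P_max_def by (simp add: field_simps)
  finally show ?thesis
    using nonlinear \<open>W > 0\<close> unfolding pi_A_star_alt by (simp add: field_simps)
qed

theorem theorem2:
  fixes n :: nat and w :: "nat \<Rightarrow> real" and q R_B W Pi :: real
  assumes "q > 0" and "R_B > 0"
    and "\<forall>b\<in>{1..n}. w b > 0"
    and "W = (\<Sum>b=1..n. w b)"
    and "0 < Pi" and "Pi < W"
  shows "(Pi < W / 2 \<longrightarrow>
           {(P, R_A). P \<ge> 0 \<and> R_A \<ge> 0 \<and> pi_A_star W q P R_A R_B = Pi} =
             {(P, R_A). 0 \<le> P \<and> P < (W - 2 * Pi) / (W - Pi) * q * R_B \<and>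
                        R_A = 2 * Pi / W * (q * R_B - P)}
           \<union> {(P, R_A). (W - 2 * Pi) / (W - Pi) * q * R_B \<le> P \<and> P \<le> P_max W Pi q R_B \<and>
                        R_A = g_fun W Pi q R_B P})
       \<and> (Pi \<ge> W / 2 \<longrightarrow>
           {(P, R_A). P \<ge> 0 \<and> R_A \<ge> 0 \<and> pi_A_star W q P R_A R_B = Pi} =
             {(P, R_A). 0 \<le> P \<and> P \<le> P_max W Pi q R_B \<and> R_A = g_fun W Pi q R_B P})
       \<and> (\<forall>P R_A. P > P_max W Pi q R_B \<longrightarrow> R_A \<ge> 0 \<longrightarrow> pi_A_star W q P R_A R_B > Pi)"
proof -
  have Q: "q * R_B > 0" using assms by simp
  define T where "T = (W - 2 * Pi) / (W - Pi) * q * R_B"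
  have T_less: "T < q * R_B" using Q assms unfolding T_def by (simp add: field_simps)
  have T_pos_iff: "T > 0 \<longleftrightarrow> Pi < W / 2" using Q assms unfolding T_def by (simp add: field_simps)
  have P_max_pos: "P_max W Pi q R_B > 0" using Q assms unfolding P_max_def by simp
  have linear_nonneg: "2 * Pi / W * (q * R_B - P) \<ge> 0" if "P < T" for P
    using that T_less assms by simp
  have g_nonneg: "g_fun W Pi q R_B P \<ge> 0" for P
    using g_fun_eq[OF Q assms(5,6)] P_max_pos by simp
  note level = pi_A_star_eq_iff[OF Q assms(5,6)]
  show ?thesis
    unfolding T_def[symmetric]
  proof (intro conjI impI allI)
    assume "Pi < W / 2"
    then show "{(P, R_A). P \<ge> 0 \<and> R_A \<ge> 0 \<and> pi_A_star W q P R_A R_B = Pi} =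
        {(P, R_A). 0 \<le> P \<and> P < T \<and> R_A = 2 * Pi / W * (q * R_B - P)}
      \<union> {(P, R_A). T \<le> P \<and> P \<le> P_max W Pi q R_B \<and> R_A = g_fun W Pi q R_B P}"
      using level T_pos_iff linear_nonneg g_nonneg by (auto simp: T_def)
  next
    assume "Pi \<ge> W / 2"
    then show "{(P, R_A). P \<ge> 0 \<and> R_A \<ge> 0 \<and> pi_A_star W q P R_A R_B = Pi} =
        {(P, R_A). 0 \<le> P \<and> P \<le> P_max W Pi q R_B \<and> R_A = g_fun W Pi q R_B P}"
      using level T_pos_iff g_nonneg by (auto simp: T_def)
  qed (use pi_A_star_gt_above_P_max[OF Q assms(5,6)] in auto)
qed

end
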